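(* Let $n$ be a positive integer such that every component of $2n+1$ is greater than $54$. Then there exists an $(80n+40,[2^n,6^n,18^n,54^n,40],40)$ partitioned difference family in $\mathbb{Z}_{40}\times\mathbb{F}_{2n+1}$.
   Context: The components of an integer $m$ are its maximal prime power factors, and $\mathbb{F}_m$ denotes the ring which is the direct product of the finite fields whose orders are the components of $m$; $\mathbb{Z}_{40}\times\mathbb{F}_{2n+1}$ is taken as an additive group. For $B$ a subset of a finite additive group $\Gamma$, $\Delta B$ is the multiset $\{x-y:x,y\in B,x\ne y\}$; for $\mathcal{F}=\{B_1,\dots,B_t\}$, $\Delta\mathcal{F}$ is the multiset union of the $\Delta B_i$. A $(v,[k_1,\dots,k_t],\lambda)$ partitioned difference family in $\Gamma$ ($|\Gamma|=v$) is a partition of $\Gamma$ into blocks $B_i$ with $|B_i|=k_i$ such that $\Delta\mathcal{F}$ contains every non-zero element exactly $\lambda$ times. Exponents denote multiplicities of block sizes. *)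

theory Defs
  imports "HOL-Algebra.Ring" "HOL-Algebra.Ring_Divisibility" "HOL-Library.Multiset" "HOL-Library.FuncSet"
    "HOL-Computational_Algebra.Primes"
begin

definition diff_multiset :: "('g \<Rightarrow> 'g \<Rightarrow> 'g) \<Rightarrow> 'g set \<Rightarrow> 'g multiset" where
  "diff_multiset sub B =
     image_mset (\<lambda>(x, y). sub x y) (mset_set {(x, y). x \<in> B \<and> y \<in> B \<and> x \<noteq> y})"

definition is_PDF ::
  "'g set \<Rightarrow> ('g \<Rightarrow> 'g \<Rightarrow> 'g) \<Rightarrow> 'g \<Rightarrow> nat \<Rightarrow> nat multiset \<Rightarrow> nat \<Rightarrow> 'g set list \<Rightarrow> bool" where
  "is_PDF \<Gamma> sub z0 v ks lam Bs \<longleftrightarrow>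
     card \<Gamma> = v \<and>
     (\<forall>B \<in> set Bs. B \<noteq> {} \<and> B \<subseteq> \<Gamma>) \<and>
     (\<forall>i < length Bs. \<forall>j < length Bs. i \<noteq> j \<longrightarrow> Bs ! i \<inter> Bs ! j = {}) \<and>
     \<Union> (set Bs) = \<Gamma> \<and>
     mset (map card Bs) = ks \<and>
     (\<forall>g \<in> \<Gamma> - {z0}. count (sum_list (map (diff_multiset sub) Bs)) g = lam)"

text \<open>The additive group \<open>\<int>\<^sub>40 \<times> \<bbbF>\<^sub>m\<close>, where \<open>K p\<close> is the finite field whose
  order is the \<open>p\<close>-component of \<open>m\<close> (for \<open>p\<close> a prime factor of \<open>m\<close>).\<close>

definition ZF_carrier :: "nat \<Rightarrow> (nat \<Rightarrow> 'a ring) \<Rightarrow> (int \<times> (nat \<Rightarrow> 'a)) set" where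
  "ZF_carrier m K = {0..<40} \<times> (PiE (prime_factors m) (\<lambda>p. carrier (K p)))"

definition ZF_minus :: "nat \<Rightarrow> (nat \<Rightarrow> 'a ring) \<Rightarrow> int \<times> (nat \<Rightarrow> 'a) \<Rightarrow> int \<times> (nat \<Rightarrow> 'a) \<Rightarrow> int \<times> (nat \<Rightarrow> 'a)" where
  "ZF_minus m K u v = ((fst u - fst v) mod 40,
      restrict (\<lambda>p. a_minus (K p) (snd u p) (snd v p)) (prime_factors m))"

definition ZF_zero :: "nat \<Rightarrow> (nat \<Rightarrow> 'a ring) \<Rightarrow> int \<times> (nat \<Rightarrow> 'a)" where
  "ZF_zero m K = (0, restrict (\<lambda>p. zero (K p)) (prime_factors m))"

end

theory Submission
  imports Defs
begin

text \<open>
  Let F be the product of the fields K p, so that F has 2n + 1 elements, and let S contain one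
  element of each pair {x, -x} of nonzero elements of F, so that S has n elements.  Colour
  Z_40 with four colours whose classes have 1, 3, 9 and 27 elements, such that every nonzero
  c is the difference g - h of exactly 20 ordered pairs of equally coloured elements.  As every
  component of 2n + 1 exceeds 54, there are y_0, ..., y_26 in F such that every y_j and every
  difference of two distinct signed elements +-y_j, +-y_k is a unit.  The element of rank j in
  its colour class gets the labels y_j and -y_j.  For a colour class A and s in S, the pairs
  (g, s * l) with g in A and l a label of g form a block of 2|A| elements; together with
  Z_40 x {0} these blocks partition Z_40 x F.

  A difference (c, 0) with c nonzero occurs 40 times, all inside Z_40 x {0}.  A difference
  (c, t) with t nonzero comes from a pair u, v of signed points of one class with gap c and a
  multiplier s in S with s * (label u - label v) = t.  Changing both signs negates the label
  difference, and exactly one of x, -x lies in S, so a pair and its sign change have exactly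
  one multiplier between them.  Every gap c is realised by 80 ordered pairs of signed points
  (four signs for each of the 20 pairs of points if c is nonzero, two for each of the 40
  points if c = 0), which gives 40.
\<close>

section \<open>Half systems and fields of odd order\<close>

lemma half_system_exists:
  assumes "\<And>x. x \<in> X \<Longrightarrow> f x \<in> X \<and> f (f x) = x \<and> f x \<noteq> x"
  shows "\<exists>H\<subseteq>X. \<forall>x\<in>X. f x \<in> H \<longleftrightarrow> x \<notin> H"
proof -
  define pick where "pick x = (SOME a. a \<in> {x, f x})" for x
  have pick_orbit: "pick (f x) = pick x" "pick x \<in> {x, f x}" if "x \<in> X" for x
  proof -
    have "{f x, f (f x)} = {x, f x}" using assms[OF that] by auto
    then show "pick (f x) = pick x" by (simp add: pick_def)
    show "pick x \<in> {x, f x}" unfolding pick_def by (rule someI[of _ x]) simp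
  qed
  define H where "H = {x\<in>X. pick x = x}"
  have "f x \<in> H \<longleftrightarrow> x \<notin> H" if "x \<in> X" for x
    using that pick_orbit[OF that] assms[OF that] by (auto simp: H_def)
  moreover have "H \<subseteq> X" by (auto simp: H_def)
  ultimately show ?thesis by blast
qed

lemma card_half_system:
  assumes "finite X" and inv: "\<And>x. x \<in> X \<Longrightarrow> f x \<in> X \<and> f (f x) = x"
    and "H \<subseteq> X" and half: "\<forall>x\<in>X. f x \<in> H \<longleftrightarrow> x \<notin> H"
  shows "card X = 2 * card H"
proof -
  have "X \<subseteq> H \<union> f ` H"
  proof
    fix x assume "x \<in> X"
    then show "x \<in> H \<union> f ` H"
      using inv[of x] half by (cases "x \<in> H") (auto intro: image_eqI[of _ f "f x"])
  qed
  then have "X = H \<union> f ` H" using assms(3) inv by auto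
  moreover have "H \<inter> f ` H = {}" using assms(3) half by auto
  moreover have "inj_on f H" using assms(3) inv by (metis inj_on_inverseI subsetD)
  moreover have "finite H" using assms(1,3) finite_subset by blast
  ultimately show ?thesis by (simp add: card_Un_disjoint card_image)
qed

context ring
begin

lemma diff_eq_zero_iff: "x \<in> carrier R \<Longrightarrow> y \<in> carrier R \<Longrightarrow> x \<ominus> y = \<zero> \<longleftrightarrow> x = y"
  by (metis a_minus_def add.inv_closed minus_equality r_neg)

lemma minus_eq_zero_iff: "x \<in> carrier R \<Longrightarrow> \<ominus> x = \<zero> \<longleftrightarrow> x = \<zero>"
  by (metis minus_minus minus_zero)

lemma r_diff_distr: "s \<in> carrier R \<Longrightarrow> x \<in> carrier R \<Longrightarrow> y \<in> carrier R \<Longrightarrow>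
    s \<otimes> (x \<ominus> y) = s \<otimes> x \<ominus> s \<otimes> y"
  by algebra

lemma minus_diff_minus: "x \<in> carrier R \<Longrightarrow> y \<in> carrier R \<Longrightarrow> \<ominus> x \<ominus> \<ominus> y = \<ominus> (x \<ominus> y)"
  by algebra

end

context field
begin

lemma one_plus_one_neq_zero:
  assumes "finite (carrier R)" and "odd (card (carrier R))"
  shows "\<one> \<oplus> \<one> \<noteq> \<zero>"
proof
  assume two: "\<one> \<oplus> \<one> = \<zero>"
  have shift: "x \<oplus> \<one> \<in> carrier R \<and> (x \<oplus> \<one>) \<oplus> \<one> = x \<and> x \<oplus> \<one> \<noteq> x"
    if "x \<in> carrier R" for x
    using that two by (simp add: a_assoc)
  then obtain H where "H \<subseteq> carrier R" "\<forall>x\<in>carrier R. x \<oplus> \<one> \<in> H \<longleftrightarrow> x \<notin> H"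
    using half_system_exists[of "carrier R" "\<lambda>x. x \<oplus> \<one>"] by blast
  then have "card (carrier R) = 2 * card H"
    using card_half_system[OF assms(1), of "\<lambda>x. x \<oplus> \<one>"] shift by simp
  with assms(2) show False by simp
qed

lemma eq_mult_inv_iff:
  assumes "d \<in> carrier R" and "d \<noteq> \<zero>" and "s \<in> carrier R" and "t \<in> carrier R"
  shows "s \<otimes> d = t \<longleftrightarrow> s = t \<otimes> inv d"
proof -
  have d: "d \<in> Units R" using assms(1,2) field_Units by blast
  show ?thesis
  proof
    assume "s \<otimes> d = t"
    then show "s = t \<otimes> inv d" using d assms(3) by (auto simp: m_assoc Units_closed)
  next
    assume "s = t \<otimes> inv d"
    then show "s \<otimes> d = t" using d assms(4) by (simp add: m_assoc Units_closed)
  qed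
qed

lemma minus_neq_self:
  assumes "finite (carrier R)" and "odd (card (carrier R))"
    and "x \<in> carrier R" and "x \<noteq> \<zero>"
  shows "\<ominus> x \<noteq> x"
proof
  assume "\<ominus> x = x"
  then have "x \<otimes> (\<one> \<oplus> \<one>) = \<zero>"
    using assms(3) by (metis l_neg one_closed r_distr r_one)
  then show False
    using one_plus_one_neq_zero[OF assms(1,2)] assms(3,4) integral_iff by simp
qed

end

section \<open>Partitioned difference families from sets of blocks\<close>

lemma count_diff_multiset:
  assumes "finite B"
  shows "count (diff_multiset sub B) t = card {(x, y). x \<in> B \<and> y \<in> B \<and> x \<noteq> y \<and> sub x y = t}"
proof -
  let ?P = "{(x, y). x \<in> B \<and> y \<in> B \<and> x \<noteq> y}"
  have "finite ?P" by (rule finite_subset[of _ "B \<times> B"]) (use assms in auto)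
  then have "count (diff_multiset sub B) t = card ((\<lambda>(x, y). sub x y) -` {t} \<inter> ?P)"
    by (simp add: diff_multiset_def count_image_mset)
  also have "(\<lambda>(x, y). sub x y) -` {t} \<inter> ?P = {(x, y). x \<in> B \<and> y \<in> B \<and> x \<noteq> y \<and> sub x y = t}"
    by auto
  finally show ?thesis .
qed

lemma count_diff_multiset_image:
  assumes "finite B" and "inj_on f B" and "\<And>x y. x \<in> B \<Longrightarrow> y \<in> B \<Longrightarrow> sub (f x) (f y) = d x y"
  shows "count (diff_multiset sub (f ` B)) t = card {(x, y). x \<in> B \<and> y \<in> B \<and> x \<noteq> y \<and> d x y = t}"
proof -
  let ?P = "{(x, y). x \<in> B \<and> y \<in> B \<and> x \<noteq> y \<and> d x y = t}"
  have "{(x', y'). x' \<in> f ` B \<and> y' \<in> f ` B \<and> x' \<noteq> y' \<and> sub x' y' = t} = map_prod f f ` ?P"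
    using assms(2,3) by (auto simp: inj_on_eq_iff)
  moreover have "inj_on (map_prod f f) ?P"
    using assms(2) by (auto simp: inj_on_def)
  ultimately show ?thesis
    using assms(1) by (simp add: count_diff_multiset card_image)
qed

lemma is_PDF_of_block_set:
  assumes "finite \<B>" and "card \<Gamma> = v"
    and "\<And>B. B \<in> \<B> \<Longrightarrow> B \<noteq> {} \<and> B \<subseteq> \<Gamma>"
    and "\<And>B B'. B \<in> \<B> \<Longrightarrow> B' \<in> \<B> \<Longrightarrow> B \<noteq> B' \<Longrightarrow> B \<inter> B' = {}"
    and "\<Union> \<B> = \<Gamma>"
    and "image_mset card (mset_set \<B>) = ks"
    and "\<And>g. g \<in> \<Gamma> - {z0} \<Longrightarrow> (\<Sum>B\<in>\<B>. count (diff_multiset sub B) g) = lam"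
  shows "\<exists>Bs. is_PDF \<Gamma> sub z0 v ks lam Bs"
proof -
  obtain Bs where Bs: "distinct Bs" "set Bs = \<B>"
    using finite_distinct_list[OF assms(1)] by blast
  have "Bs ! i \<inter> Bs ! j = {}" if "i < length Bs" "j < length Bs" "i \<noteq> j" for i j
    using assms(4) Bs nth_eq_iff_index_eq[OF Bs(1)] that by (metis nth_mem)
  moreover have "mset (map card Bs) = ks"
    using assms(6) Bs by (simp add: mset_set_set[symmetric])
  moreover have "count (sum_list (map (diff_multiset sub) Bs)) g = lam" if "g \<in> \<Gamma> - {z0}" for g
    using assms(7)[OF that] Bs by (simp add: sum_list_distinct_conv_sum_set count_sum)
  ultimately have "is_PDF \<Gamma> sub z0 v ks lam Bs"
    using assms(2,3,5) Bs(2) unfolding is_PDF_def by blast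
  then show ?thesis ..
qed

lemma image_mset_mset_set_Times:
  assumes "finite A" and "finite B"
  shows "image_mset (\<lambda>(a, b). f a) (mset_set (A \<times> B)) = (\<Sum>a\<in>A. replicate_mset (card B) (f a))"
  using assms(1)
proof (induction A rule: finite_induct)
  case (insert a A)
  have "image_mset (\<lambda>(a, b). f a) (mset_set ({a} \<times> B)) = image_mset (\<lambda>_. f a) (mset_set ({a} \<times> B))"
    by (rule image_mset_cong) (use assms(2) in auto)
  then have row: "image_mset (\<lambda>(a, b). f a) (mset_set ({a} \<times> B)) = replicate_mset (card B) (f a)"
    by (simp add: image_mset_const_eq card_cartesian_product)
  have "insert a A \<times> B = {a} \<times> B \<union> A \<times> B" by blast
  moreover have "mset_set ({a} \<times> B \<union> A \<times> B) = mset_set ({a} \<times> B) + mset_set (A \<times> B)"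
    using insert(1,2) assms(2) by (intro mset_set_Union) auto
  ultimately show ?case
    using row insert(1,2,3) by simp
qed simp

section \<open>Products of finite fields of odd order\<close>

locale odd_field_family =
  fixes I :: "'i set" and K :: "'i \<Rightarrow> 'a ring"
  assumes finite_index: "finite I"
    and field_K: "i \<in> I \<Longrightarrow> field (K i)"
    and finite_K: "i \<in> I \<Longrightarrow> finite (carrier (K i))"
    and odd_card_K: "i \<in> I \<Longrightarrow> odd (card (carrier (K i)))"
begin

definition F :: "('i \<Rightarrow> 'a) set" where
  "F = (\<Pi>\<^sub>E i\<in>I. carrier (K i))"

definition F_zero :: "'i \<Rightarrow> 'a" where
  "F_zero = (\<lambda>i\<in>I. \<zero>\<^bsub>K i\<^esub>)"

definition F_neg :: "('i \<Rightarrow> 'a) \<Rightarrow> 'i \<Rightarrow> 'a" where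
  "F_neg x = (\<lambda>i\<in>I. \<ominus>\<^bsub>K i\<^esub> x i)"

definition F_minus :: "('i \<Rightarrow> 'a) \<Rightarrow> ('i \<Rightarrow> 'a) \<Rightarrow> 'i \<Rightarrow> 'a" where
  "F_minus x y = (\<lambda>i\<in>I. x i \<ominus>\<^bsub>K i\<^esub> y i)"

definition F_mult :: "('i \<Rightarrow> 'a) \<Rightarrow> ('i \<Rightarrow> 'a) \<Rightarrow> 'i \<Rightarrow> 'a" where
  "F_mult x y = (\<lambda>i\<in>I. x i \<otimes>\<^bsub>K i\<^esub> y i)"

definition F_div :: "('i \<Rightarrow> 'a) \<Rightarrow> ('i \<Rightarrow> 'a) \<Rightarrow> 'i \<Rightarrow> 'a" where
  "F_div x y = (\<lambda>i\<in>I. x i \<otimes>\<^bsub>K i\<^esub> inv\<^bsub>K i\<^esub> y i)"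

definition F_units :: "('i \<Rightarrow> 'a) set" where
  "F_units = {x \<in> F. \<forall>i\<in>I. x i \<noteq> \<zero>\<^bsub>K i\<^esub>}"

lemma F_eqI: "x \<in> F \<Longrightarrow> y \<in> F \<Longrightarrow> (\<And>i. i \<in> I \<Longrightarrow> x i = y i) \<Longrightarrow> x = y"
  unfolding F_def by (rule PiE_ext)

lemma F_eq_iff: "x \<in> F \<Longrightarrow> y \<in> F \<Longrightarrow> x = y \<longleftrightarrow> (\<forall>i\<in>I. x i = y i)"
  using F_eqI by blast

lemma F_component: "x \<in> F \<Longrightarrow> i \<in> I \<Longrightarrow> x i \<in> carrier (K i)"
  unfolding F_def by auto

lemma F_units_F: "x \<in> F_units \<Longrightarrow> x \<in> F"
  by (simp add: F_units_def)

lemma F_apply: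
  assumes "i \<in> I"
  shows "F_zero i = \<zero>\<^bsub>K i\<^esub>" and "F_neg x i = \<ominus>\<^bsub>K i\<^esub> x i"
    and "F_minus x y i = x i \<ominus>\<^bsub>K i\<^esub> y i" and "F_mult x y i = x i \<otimes>\<^bsub>K i\<^esub> y i"
    and "F_div x y i = x i \<otimes>\<^bsub>K i\<^esub> inv\<^bsub>K i\<^esub> y i"
  using assms by (simp_all add: F_zero_def F_neg_def F_minus_def F_mult_def F_div_def)

lemma card_F: "card F = (\<Prod>i\<in>I. card (carrier (K i)))"
  unfolding F_def using finite_index by (rule card_PiE)

lemma finite_F: "finite F"
  unfolding F_def using finite_index finite_K by (simp add: finite_PiE)

lemma K_closed:
  assumes "i \<in> I"
  shows "\<zero>\<^bsub>K i\<^esub> \<in> carrier (K i)"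
    and "a \<in> carrier (K i) \<Longrightarrow> \<ominus>\<^bsub>K i\<^esub> a \<in> carrier (K i)"
    and "a \<in> carrier (K i) \<Longrightarrow> b \<in> carrier (K i) \<Longrightarrow> a \<ominus>\<^bsub>K i\<^esub> b \<in> carrier (K i)"
    and "a \<in> carrier (K i) \<Longrightarrow> b \<in> carrier (K i) \<Longrightarrow> a \<otimes>\<^bsub>K i\<^esub> b \<in> carrier (K i)"
    and "a \<in> carrier (K i) \<Longrightarrow> b \<in> carrier (K i) \<Longrightarrow> b \<noteq> \<zero>\<^bsub>K i\<^esub> \<Longrightarrow>
      a \<otimes>\<^bsub>K i\<^esub> inv\<^bsub>K i\<^esub> b \<in> carrier (K i)"
proof -
  interpret field "K i" using field_K assms .
  show "\<zero>\<^bsub>K i\<^esub> \<in> carrier (K i)" by simp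
  show "a \<in> carrier (K i) \<Longrightarrow> \<ominus>\<^bsub>K i\<^esub> a \<in> carrier (K i)"
    and "a \<in> carrier (K i) \<Longrightarrow> b \<in> carrier (K i) \<Longrightarrow> a \<ominus>\<^bsub>K i\<^esub> b \<in> carrier (K i)"
    and "a \<in> carrier (K i) \<Longrightarrow> b \<in> carrier (K i) \<Longrightarrow> a \<otimes>\<^bsub>K i\<^esub> b \<in> carrier (K i)"
    by auto
  show "a \<in> carrier (K i) \<Longrightarrow> b \<in> carrier (K i) \<Longrightarrow> b \<noteq> \<zero>\<^bsub>K i\<^esub> \<Longrightarrow>
      a \<otimes>\<^bsub>K i\<^esub> inv\<^bsub>K i\<^esub> b \<in> carrier (K i)"
    using field_Units by auto
qed

lemma F_closed:
  "F_zero \<in> F"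
  "x \<in> F \<Longrightarrow> F_neg x \<in> F"
  "x \<in> F \<Longrightarrow> y \<in> F \<Longrightarrow> F_minus x y \<in> F"
  "x \<in> F \<Longrightarrow> y \<in> F \<Longrightarrow> F_mult x y \<in> F"
  "x \<in> F \<Longrightarrow> y \<in> F_units \<Longrightarrow> F_div x y \<in> F"
  unfolding F_def F_zero_def F_neg_def F_minus_def F_mult_def F_div_def F_units_def
  by (auto simp: K_closed PiE_iff)

lemma ring_K: "i \<in> I \<Longrightarrow> ring (K i)"
  using field_K by (simp add: field_def domain_def cring_def)

lemma F_neg_neg: "x \<in> F \<Longrightarrow> F_neg (F_neg x) = x"
  by (intro F_eqI F_closed)
    (simp_all add: F_neg_def F_component abelian_group.minus_minus[OF ring.is_abelian_group[OF ring_K]])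

lemma F_neg_zero: "F_neg F_zero = F_zero"
  unfolding F_neg_def F_zero_def by (intro restrict_ext) (simp add: ring.minus_zero[OF ring_K])

lemma F_neg_eq_zero_iff: "x \<in> F \<Longrightarrow> F_neg x = F_zero \<longleftrightarrow> x = F_zero"
  by (metis F_neg_neg F_neg_zero)

lemma F_neg_neq_self:
  assumes "x \<in> F" and "x \<noteq> F_zero"
  shows "F_neg x \<noteq> x"
proof
  assume fixed: "F_neg x = x"
  obtain i where i: "i \<in> I" "x i \<noteq> \<zero>\<^bsub>K i\<^esub>"
    using assms F_eqI[OF assms(1) F_closed(1)] by (auto simp: F_zero_def)
  have "\<ominus>\<^bsub>K i\<^esub> x i = x i" using fun_cong[OF fixed, of i] i(1) by (simp add: F_neg_def)
  then show False
    using field.minus_neq_self[OF field_K finite_K odd_card_K F_component[OF assms(1)] i(2)] i(1)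
    by simp
qed

lemma F_minus_self: "x \<in> F \<Longrightarrow> F_minus x x = F_zero"
  unfolding F_minus_def F_zero_def
  by (intro restrict_ext) (simp add: F_component ring.diff_eq_zero_iff[OF ring_K])

lemma F_mult_minus_right:
  "s \<in> F \<Longrightarrow> x \<in> F \<Longrightarrow> y \<in> F \<Longrightarrow> F_mult s (F_minus x y) = F_minus (F_mult s x) (F_mult s y)"
  unfolding F_mult_def F_minus_def
  by (intro restrict_ext) (simp add: F_component ring.r_diff_distr[OF ring_K])

lemma F_mult_neg_right: "s \<in> F \<Longrightarrow> x \<in> F \<Longrightarrow> F_mult s (F_neg x) = F_neg (F_mult s x)"
  unfolding F_mult_def F_neg_def
  by (intro restrict_ext) (simp add: F_component ring.r_minus[OF ring_K])

lemma F_mult_neg_left: "s \<in> F \<Longrightarrow> x \<in> F \<Longrightarrow> F_mult (F_neg s) x = F_neg (F_mult s x)"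
  unfolding F_mult_def F_neg_def
  by (intro restrict_ext) (simp add: F_component ring.l_minus[OF ring_K])

lemma F_minus_neg: "x \<in> F \<Longrightarrow> y \<in> F \<Longrightarrow> F_minus (F_neg x) (F_neg y) = F_neg (F_minus x y)"
  unfolding F_minus_def F_neg_def
  by (intro restrict_ext) (simp add: F_component ring.minus_diff_minus[OF ring_K])

lemma F_mult_eq_iff_div:
  assumes "d \<in> F_units" and "s \<in> F" and "t \<in> F"
  shows "F_mult s d = t \<longleftrightarrow> s = F_div t d"
proof -
  have "s i \<otimes>\<^bsub>K i\<^esub> d i = t i \<longleftrightarrow> s i = t i \<otimes>\<^bsub>K i\<^esub> inv\<^bsub>K i\<^esub> d i" if "i \<in> I" for i
    using field.eq_mult_inv_iff[OF field_K[OF that]] assms that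
    by (simp add: F_units_def F_component)
  then show ?thesis
    using assms by (simp add: F_eq_iff F_closed F_units_F F_apply)
qed

lemma F_mult_eq_zero_iff:
  assumes "d \<in> F_units" and "s \<in> F"
  shows "F_mult s d = F_zero \<longleftrightarrow> s = F_zero"
proof -
  have "s i \<otimes>\<^bsub>K i\<^esub> d i = \<zero>\<^bsub>K i\<^esub> \<longleftrightarrow> s i = \<zero>\<^bsub>K i\<^esub>" if "i \<in> I" for i
    using domain.integral_iff[OF field.axioms(1)[OF field_K[OF that]]] assms that
    by (simp add: F_units_def F_component)
  then show ?thesis
    using assms by (simp add: F_eq_iff F_closed F_units_F F_apply)
qed

lemma F_mult_right_cancel:
  "d \<in> F_units \<Longrightarrow> s \<in> F \<Longrightarrow> s' \<in> F \<Longrightarrow> F_mult s d = F_mult s' d \<Longrightarrow> s = s'"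
  using F_mult_eq_iff_div F_closed(4) F_units_F by metis

lemma F_minus_in_units_iff:
  "x \<in> F \<Longrightarrow> y \<in> F \<Longrightarrow> F_minus x y \<in> F_units \<longleftrightarrow> (\<forall>i\<in>I. x i \<noteq> y i)"
  unfolding F_units_def by (simp add: F_closed F_apply F_component ring.diff_eq_zero_iff[OF ring_K])

lemma F_neg_units: "x \<in> F_units \<Longrightarrow> F_neg x \<in> F_units"
  unfolding F_units_def
  by (simp add: F_closed F_apply F_component ring.minus_eq_zero_iff[OF ring_K])

lemma F_neg_involution:
  "x \<in> F - {F_zero} \<Longrightarrow> F_neg x \<in> F - {F_zero} \<and> F_neg (F_neg x) = x \<and> F_neg x \<noteq> x"
  using F_closed(2) F_neg_eq_zero_iff F_neg_neg F_neg_neq_self by auto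

definition S :: "('i \<Rightarrow> 'a) set" where
  "S = (SOME H. H \<subseteq> F - {F_zero} \<and> (\<forall>x\<in>F - {F_zero}. F_neg x \<in> H \<longleftrightarrow> x \<notin> H))"

lemma S_half_system:
  shows S_subset: "S \<subseteq> F - {F_zero}"
    and S_neg_iff: "x \<in> F - {F_zero} \<Longrightarrow> F_neg x \<in> S \<longleftrightarrow> x \<notin> S"
proof -
  have "S \<subseteq> F - {F_zero} \<and> (\<forall>x\<in>F - {F_zero}. F_neg x \<in> S \<longleftrightarrow> x \<notin> S)"
    unfolding S_def by (rule someI_ex) (use half_system_exists F_neg_involution in blast)
  then show "S \<subseteq> F - {F_zero}" and "x \<in> F - {F_zero} \<Longrightarrow> F_neg x \<in> S \<longleftrightarrow> x \<notin> S"
    by auto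
qed

lemma card_F_eq: "card F = 2 * card S + 1"
proof -
  have "card (F - {F_zero}) = 2 * card S"
    using card_half_system[of "F - {F_zero}" F_neg S] finite_F F_neg_involution S_half_system
    by auto
  then show ?thesis
    using finite_F F_closed(1) by (metis card_Suc_Diff1 Suc_eq_plus1)
qed

lemma S_F: "s \<in> S \<Longrightarrow> s \<in> F"
  using S_subset by blast

lemma finite_S: "finite S"
  using S_subset finite_F finite_subset by blast

lemma card_multipliers:
  assumes "d \<in> F_units" and "t \<in> F" and "t \<noteq> F_zero"
  shows "card {s\<in>S. F_mult s d = t} + card {s\<in>S. F_mult s (F_neg d) = t} = 1"
proof -
  define x where "x = F_div t d"
  have d: "d \<in> F" using assms(1) by (rule F_units_F)
  have "F_mult x d = t"
    using F_mult_eq_iff_div[OF assms(1) F_closed(5)[OF assms(2,1)] assms(2)] by (simp add: x_def)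
  then have x: "x \<in> F - {F_zero}"
    using F_closed(5)[OF assms(2,1)] F_mult_eq_zero_iff[OF assms(1) F_closed(1)] assms(3)
    by (auto simp: x_def)
  have solutions: "{s\<in>S. F_mult s d = t} = S \<inter> {x}"
    using F_mult_eq_iff_div[OF assms(1) _ assms(2)] S_subset by (auto simp: x_def)
  have neg_solutions: "{s\<in>S. F_mult s (F_neg d) = t} = S \<inter> {F_neg x}"
  proof -
    have "F_mult s (F_neg d) = t \<longleftrightarrow> s = F_neg x" if "s \<in> F" for s
    proof -
      have "F_mult s (F_neg d) = F_mult (F_neg s) d"
        using that d by (simp add: F_mult_neg_left F_mult_neg_right)
      then show ?thesis
        using F_mult_eq_iff_div[OF assms(1) F_closed(2)[OF that] assms(2)] that F_neg_neg x
        by (auto simp: x_def)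
    qed
    then show ?thesis using S_subset by auto
  qed
  show ?thesis
    unfolding solutions neg_solutions using S_neg_iff[OF x] by (cases "x \<in> S") auto
qed

definition signed :: "bool \<Rightarrow> ('i \<Rightarrow> 'a) \<Rightarrow> 'i \<Rightarrow> 'a" where
  "signed b x = (if b then x else F_neg x)"

lemma signed_F: "x \<in> F \<Longrightarrow> signed b x \<in> F"
  by (simp add: signed_def F_closed)

lemma signed_units: "x \<in> F_units \<Longrightarrow> signed b x \<in> F_units"
  by (simp add: signed_def F_neg_units)

lemma signed_Not: "x \<in> F \<Longrightarrow> signed (\<not> b) x = F_neg (signed b x)"
  by (simp add: signed_def F_neg_neg)

lemma exists_separated_component:
  assumes "i \<in> I" and "2 * N < card (carrier (K i))"
  shows "\<exists>e. e ` {..<N} \<subseteq> carrier (K i) - {\<zero>\<^bsub>K i\<^esub>} \<and>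
    (\<forall>j<N. \<forall>k<N. \<forall>b b'. (j, b) \<noteq> (k, b') \<longrightarrow>
      (if b then e j else \<ominus>\<^bsub>K i\<^esub> e j) \<noteq> (if b' then e k else \<ominus>\<^bsub>K i\<^esub> e k))"
proof -
  interpret field "K i" using field_K assms(1) .
  let ?X = "carrier (K i) - {\<zero>\<^bsub>K i\<^esub>}"
  have inv: "\<ominus>\<^bsub>K i\<^esub> x \<in> ?X \<and> \<ominus>\<^bsub>K i\<^esub> (\<ominus>\<^bsub>K i\<^esub> x) = x \<and> \<ominus>\<^bsub>K i\<^esub> x \<noteq> x"
    if "x \<in> ?X" for x
    using that minus_neq_self[OF finite_K odd_card_K] minus_eq_zero_iff assms(1) by auto
  then obtain H where H: "H \<subseteq> ?X" "\<forall>x\<in>?X. \<ominus>\<^bsub>K i\<^esub> x \<in> H \<longleftrightarrow> x \<notin> H"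
    using half_system_exists[of ?X "a_inv (K i)"] by blast
  have "card ?X = 2 * card H"
    using card_half_system[of ?X "a_inv (K i)" H] H inv finite_K[OF assms(1)] by auto
  moreover have "card ?X = card (carrier (K i)) - 1"
    using finite_K[OF assms(1)] by (simp add: card_Diff_singleton)
  ultimately have "card {..<N} \<le> card H" using assms(2) by simp
  moreover have "finite H" using H(1) finite_K[OF assms(1)] finite_subset by blast
  ultimately obtain e where e: "inj_on e {..<N}" "e ` {..<N} \<subseteq> H"
    using card_le_inj[of "{..<N}" H] by auto
  have "(if b then e j else \<ominus>\<^bsub>K i\<^esub> e j) \<noteq> (if b' then e k else \<ominus>\<^bsub>K i\<^esub> e k)"
    if "j < N" and "k < N" and "(j, b) \<noteq> (k, b')" for j k b b'
  proof -
    have "e j \<in> H" and "e k \<in> H" using e(2) that(1,2) by auto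
    then have "\<ominus>\<^bsub>K i\<^esub> e j \<notin> H" and "\<ominus>\<^bsub>K i\<^esub> e k \<notin> H" using H by auto
    with \<open>e j \<in> H\<close> \<open>e k \<in> H\<close> have "e j \<noteq> \<ominus>\<^bsub>K i\<^esub> e k" and "\<ominus>\<^bsub>K i\<^esub> e j \<noteq> e k"
      by auto
    moreover have "e j \<noteq> e k" if "j \<noteq> k"
      using e(1) \<open>j < N\<close> \<open>k < N\<close> that by (auto simp: inj_on_def)
    moreover have "\<ominus>\<^bsub>K i\<^esub> e j \<noteq> \<ominus>\<^bsub>K i\<^esub> e k" if "e j \<noteq> e k"
      using that \<open>e j \<in> H\<close> \<open>e k \<in> H\<close> H(1) by (metis Diff_iff minus_minus subsetD)
    ultimately show ?thesis using that(3) by (cases b; cases b') auto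
  qed
  then show ?thesis using e(2) H(1) by (intro exI[of _ e]) auto
qed

lemma exists_separated_units:
  assumes "\<And>i. i \<in> I \<Longrightarrow> 2 * N < card (carrier (K i))"
  shows "\<exists>y. (\<forall>j<N. y j \<in> F_units) \<and> (\<forall>j<N. \<forall>k<N. \<forall>b b'. (j, b) \<noteq> (k, b') \<longrightarrow>
    F_minus (signed b (y j)) (signed b' (y k)) \<in> F_units)"
proof -
  let ?separated = "\<lambda>i e. e ` {..<N} \<subseteq> carrier (K i) - {\<zero>\<^bsub>K i\<^esub>} \<and>
    (\<forall>j<N. \<forall>k<N. \<forall>b b'. (j, b) \<noteq> (k, b') \<longrightarrow>
      (if b then e j else \<ominus>\<^bsub>K i\<^esub> e j) \<noteq> (if b' then e k else \<ominus>\<^bsub>K i\<^esub> e k))"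
  have "\<forall>i\<in>I. \<exists>e. ?separated i e"
    by (intro ballI exists_separated_component assms)
  from bchoice[OF this] obtain e where e: "\<forall>i\<in>I. ?separated i (e i)" ..
  define y where "y j = (\<lambda>i\<in>I. e i j)" for j
  have y: "y j \<in> F_units" if "j < N" for j
  proof -
    have "e i ` {..<N} \<subseteq> carrier (K i) - {\<zero>\<^bsub>K i\<^esub>}" if "i \<in> I" for i
      using bspec[OF e that] by (rule conjunct1)
    then show ?thesis using that by (auto simp: y_def F_units_def F_def)
  qed
  have component: "signed b (y j) i = (if b then e i j else \<ominus>\<^bsub>K i\<^esub> e i j)" if "i \<in> I" for b j i
    using that by (simp add: signed_def y_def F_apply)
  have separated: "F_minus (signed b (y j)) (signed b' (y k)) \<in> F_units"
    if "j < N" and "k < N" and "(j, b) \<noteq> (k, b')" for j k b b'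
    unfolding F_minus_in_units_iff[OF signed_F[OF F_units_F[OF y]] signed_F[OF F_units_F[OF y]], OF that(1,2)]
  proof
    fix i assume "i \<in> I"
    then show "signed b (y j) i \<noteq> signed b' (y k) i"
      using conjunct2[OF bspec[OF e \<open>i \<in> I\<close>], rule_format, OF that] component[OF \<open>i \<in> I\<close>]
      by simp
  qed
  show ?thesis using y separated by (intro exI[of _ y]) simp
qed

end

section \<open>Balanced colourings of Z_40\<close>

lemma diff_mod_eq_iff:
  fixes g h c n :: int
  assumes "c \<in> {0..<n}" and "h \<in> {0..<n}"
  shows "(g - h) mod n = c \<longleftrightarrow> h = (g - c) mod n"
proof
  assume "(g - h) mod n = c"
  then have "(g - c) mod n = (g - (g - h) mod n) mod n" by simp
  also have "\<dots> = h" using assms(2) by (simp add: mod_diff_right_eq)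
  finally show "h = (g - c) mod n" ..
next
  assume "h = (g - c) mod n"
  then show "(g - h) mod n = c" using assms(1) by (simp add: mod_diff_right_eq)
qed

locale balanced_colouring =
  fixes col :: "int \<Rightarrow> nat"
  assumes balanced: "\<And>c. c \<in> {1..<40} \<Longrightarrow> card {g\<in>{0..<40}. col ((g - c) mod 40) = col g} = 20"
begin

definition colour_class :: "nat \<Rightarrow> int set" where
  "colour_class k = {g\<in>{0..<40}. col g = k}"

definition rank :: "int \<Rightarrow> nat" where
  "rank g = card {h\<in>colour_class (col g). h < g}"

definition colour_pairs :: "nat \<Rightarrow> ((int \<times> bool) \<times> (int \<times> bool)) set" where
  "colour_pairs k = {(u, v). u \<in> colour_class k \<times> UNIV \<and> v \<in> colour_class k \<times> UNIV \<and> u \<noteq> v}"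

definition gap :: "(int \<times> bool) \<times> (int \<times> bool) \<Rightarrow> int" where
  "gap q = (fst (fst q) - fst (snd q)) mod 40"

lemma finite_colour_class: "finite (colour_class k)"
  unfolding colour_class_def by (rule finite_subset[of _ "{0..<40}"]) auto

lemma finite_colour_pairs: "finite (colour_pairs k)"
  by (rule finite_subset[of _ "(colour_class k \<times> UNIV) \<times> (colour_class k \<times> UNIV)"])
    (auto simp: colour_pairs_def finite_colour_class)

lemma rank_less_card: "g \<in> {0..<40} \<Longrightarrow> rank g < card (colour_class (col g))"
  unfolding rank_def
  by (rule psubset_card_mono[OF finite_colour_class]) (auto simp: colour_class_def)

lemma rank_strict_mono:
  assumes "g \<in> colour_class k" and "h \<in> colour_class k" and "g < h"
  shows "rank g < rank h"
proof -
  have "col g = k" and "col h = k" using assms(1,2) by (simp_all add: colour_class_def)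
  then have "{x\<in>colour_class (col g). x < g} \<subset> {x\<in>colour_class (col h). x < h}"
    using assms by auto
  then show ?thesis
    unfolding rank_def by (rule psubset_card_mono[rotated]) (simp add: finite_colour_class)
qed

lemma inj_on_rank: "inj_on rank (colour_class k)"
  by (rule inj_onI) (metis rank_strict_mono less_irrefl linorder_neqE)

lemma signed_pairs_gap_eq_image:
  assumes "c \<in> {0..<40}"
  shows "{(u :: int \<times> bool, v). fst u \<in> {0..<40} \<and> fst v \<in> {0..<40} \<and>
      col (fst u) = col (fst v) \<and> u \<noteq> v \<and> (fst u - fst v) mod 40 = c} =
    (\<lambda>(g, b, b'). ((g, b), ((g - c) mod 40, b'))) `
      ({g\<in>{0..<40}. col ((g - c) mod 40) = col g} \<times> {(b, b'). c = 0 \<longrightarrow> b \<noteq> b'})"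
    (is "?P = ?pair ` (?M \<times> ?signs)")
proof
  have partner: "(g - (g - c) mod 40) mod 40 = c" for g
    using assms by (simp add: mod_diff_right_eq)
  show "?pair ` (?M \<times> ?signs) \<subseteq> ?P"
  proof
    fix q assume "q \<in> ?pair ` (?M \<times> ?signs)"
    then obtain g b b' where q: "g \<in> ?M" "(b, b') \<in> ?signs" "q = ((g, b), ((g - c) mod 40, b'))"
      by auto
    have "(g, b) \<noteq> ((g - c) mod 40, b')"
      using partner[of g] q(2) by (cases "c = 0") auto
    then show "q \<in> ?P" using q(1,3) partner[of g] by auto
  qed
  show "?P \<subseteq> ?pair ` (?M \<times> ?signs)"
  proof
    fix q assume "q \<in> ?P"
    obtain g b h b' where q_eq: "q = ((g, b), (h, b'))"
      by (metis prod.collapse)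
    with \<open>q \<in> ?P\<close> have q: "g \<in> {0..<40}" "h \<in> {0..<40}"
      "col g = col h" "(g, b) \<noteq> (h, b')" "(g - h) mod 40 = c"
      by auto
    have "h = (g - c) mod 40"
      using diff_mod_eq_iff[OF assms q(2)] q(5) by blast
    then show "q \<in> ?pair ` (?M \<times> ?signs)"
      using q q_eq by (auto intro!: image_eqI[of _ _ "(g, b, b')"])
  qed
qed

lemma card_signed_pairs_gap:
  assumes "c \<in> {0..<40}"
  shows "card {(u :: int \<times> bool, v). fst u \<in> {0..<40} \<and> fst v \<in> {0..<40} \<and>
    col (fst u) = col (fst v) \<and> u \<noteq> v \<and> (fst u - fst v) mod 40 = c} = 80"
proof -
  let ?M = "{g\<in>{0..<40}. col ((g - c) mod 40) = col g}"
  let ?signs = "{(b, b'). c = 0 \<longrightarrow> b \<noteq> (b' :: bool)}"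
  have "inj_on (\<lambda>(g, b, b'). ((g, b), ((g - c) mod 40, b'))) (?M \<times> ?signs)"
    by (auto simp: inj_on_def)
  then have "card {(u :: int \<times> bool, v). fst u \<in> {0..<40} \<and> fst v \<in> {0..<40} \<and>
      col (fst u) = col (fst v) \<and> u \<noteq> v \<and> (fst u - fst v) mod 40 = c} = card ?M * card ?signs"
    unfolding signed_pairs_gap_eq_image[OF assms] by (simp add: card_image card_cartesian_product)
  also have "\<dots> = 80"
  proof (cases "c = 0")
    case True
    then have "?M = {0..<40}" and "?signs = {(True, False), (False, True)}"
      by auto
    then show ?thesis by simp
  next
    case False
    then have "card ?M = 20" and "?signs = UNIV"
      using assms balanced by auto
    moreover have "card (UNIV :: (bool \<times> bool) set) = 4"
      by (simp add: UNIV_Times_UNIV[symmetric] card_cartesian_product del: UNIV_Times_UNIV)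
    ultimately show ?thesis by simp
  qed
  finally show ?thesis .
qed

lemma colour_pairs_disjoint: "k \<noteq> l \<Longrightarrow> colour_pairs k \<inter> colour_pairs l = {}"
  by (auto simp: colour_pairs_def colour_class_def)

lemma sum_card_colour_pairs_gap:
  assumes "c \<in> {0..<40}"
  shows "(\<Sum>k\<in>col ` {0..<40}. card {q\<in>colour_pairs k. gap q = c}) = 80"
proof -
  let ?Q = "\<lambda>k. {q\<in>colour_pairs k. gap q = c}"
  have "(\<Sum>k\<in>col ` {0..<40}. card (?Q k)) = card (\<Union>k\<in>col ` {0..<40}. ?Q k)"
    using colour_pairs_disjoint finite_colour_pairs by (intro card_UN_disjoint[symmetric]) auto
  also have "(\<Union>k\<in>col ` {0..<40}. ?Q k)
      = {(u :: int \<times> bool, v). fst u \<in> {0..<40} \<and> fst v \<in> {0..<40} \<and>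
          col (fst u) = col (fst v) \<and> u \<noteq> v \<and> (fst u - fst v) mod 40 = c}"
    unfolding colour_pairs_def colour_class_def gap_def by fastforce
  finally show ?thesis by (simp only: card_signed_pairs_gap[OF assms])
qed

end

section \<open>The blocks\<close>

locale pdf_construction =
  odd_field_family "prime_factors m" K + balanced_colouring col
  for m :: nat and K :: "nat \<Rightarrow> 'a ring" and col :: "int \<Rightarrow> nat" +
  fixes N :: nat
  assumes class_size: "\<And>k. card (colour_class k) \<le> N"
    and large_components: "\<And>p. p \<in> prime_factors m \<Longrightarrow> 2 * N < card (carrier (K p))"
begin

definition base_point :: "nat \<Rightarrow> nat \<Rightarrow> 'a" where
  "base_point = (SOME y. (\<forall>j<N. y j \<in> F_units) \<and>
     (\<forall>j<N. \<forall>k<N. \<forall>b b'. (j, b) \<noteq> (k, b') \<longrightarrow> F_minus (signed b (y j)) (signed b' (y k)) \<in> F_units))"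

lemma base_point_units: "j < N \<Longrightarrow> base_point j \<in> F_units"
  and base_point_separated: "j < N \<Longrightarrow> k < N \<Longrightarrow> (j, b) \<noteq> (k, b') \<Longrightarrow>
      F_minus (signed b (base_point j)) (signed b' (base_point k)) \<in> F_units"
proof -
  from someI_ex[OF exists_separated_units[OF large_components], folded base_point_def]
  have "\<forall>j<N. base_point j \<in> F_units"
    and "\<forall>j<N. \<forall>k<N. \<forall>b b'. (j, b) \<noteq> (k, b') \<longrightarrow>
      F_minus (signed b (base_point j)) (signed b' (base_point k)) \<in> F_units"
    by simp_all
  then show "j < N \<Longrightarrow> base_point j \<in> F_units"
    and "j < N \<Longrightarrow> k < N \<Longrightarrow> (j, b) \<noteq> (k, b') \<Longrightarrow>
      F_minus (signed b (base_point j)) (signed b' (base_point k)) \<in> F_units"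
    by simp_all
qed

definition label :: "int \<times> bool \<Rightarrow> nat \<Rightarrow> 'a" where
  "label u = signed (snd u) (base_point (rank (fst u)))"

lemma rank_less_N: "g \<in> {0..<40} \<Longrightarrow> rank g < N"
  using rank_less_card class_size order_less_le_trans by blast

lemma label_units: "fst u \<in> {0..<40} \<Longrightarrow> label u \<in> F_units"
  unfolding label_def by (intro signed_units base_point_units rank_less_N)

lemma label_F: "fst u \<in> {0..<40} \<Longrightarrow> label u \<in> F"
  using label_units F_units_F by blast

lemma label_Not: "fst u \<in> {0..<40} \<Longrightarrow> label (fst u, \<not> snd u) = F_neg (label u)"
  unfolding label_def
  by (simp add: signed_Not F_units_F base_point_units rank_less_N)

definition label_diff :: "(int \<times> bool) \<times> (int \<times> bool) \<Rightarrow> nat \<Rightarrow> 'a" where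
  "label_diff q = F_minus (label (fst q)) (label (snd q))"

lemma label_diff_units:
  assumes "q \<in> colour_pairs k"
  shows "label_diff q \<in> F_units"
proof -
  obtain u v where q: "q = (u, v)" by (cases q)
  with assms have u: "fst u \<in> colour_class k" and v: "fst v \<in> colour_class k" and "u \<noteq> v"
    by (auto simp: colour_pairs_def)
  then have "(rank (fst u), snd u) \<noteq> (rank (fst v), snd v)"
    using inj_on_rank[of k] by (auto simp: inj_on_def prod_eq_iff)
  moreover have "fst u \<in> {0..<40}" "fst v \<in> {0..<40}"
    using u v by (auto simp: colour_class_def)
  ultimately show ?thesis
    unfolding label_diff_def label_def q by (intro base_point_separated rank_less_N) simp_all
qed

definition embed :: "(nat \<Rightarrow> 'a) \<Rightarrow> int \<times> bool \<Rightarrow> int \<times> (nat \<Rightarrow> 'a)" where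
  "embed s u = (fst u, F_mult s (label u))"

lemma embed_in:
  assumes "s \<in> S" and "fst u \<in> {0..<40}"
  shows "embed s u \<in> {0..<40} \<times> (F - {F_zero})"
  using assms S_subset F_mult_eq_zero_iff[OF label_units[OF assms(2)] S_F[OF assms(1)]]
    F_closed(4)[OF S_F[OF assms(1)] label_F[OF assms(2)]]
  by (auto simp: embed_def)

lemma embed_injective:
  assumes "s \<in> S" and "s' \<in> S" and "fst u \<in> {0..<40}" and "embed s u = embed s' u'"
  shows "s = s' \<and> u = u'"
proof -
  obtain g b b' where u: "u = (g, b)" and u': "u' = (g, b')"
    using assms(4) by (cases u, cases u') (simp add: embed_def)
  let ?l = "label (g, b)"
  have l: "?l \<in> F_units" using label_units assms(3) u by simp
  have eq: "F_mult s ?l = F_mult s' (label (g, b'))"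
    using assms(4) u u' by (simp add: embed_def)
  have s: "s \<in> F" "s' \<in> F" using assms(1,2) S_F by auto
  show ?thesis
  proof (cases "b' = b")
    case True
    then have "F_mult s ?l = F_mult s' ?l" using eq by simp
    then have "s = s'" by (rule F_mult_right_cancel[OF l s])
    then show ?thesis using u u' True by simp
  next
    case False
    then have "label (g, b') = F_neg ?l"
      using label_Not[of "(g, b)"] assms(3) u by (cases b) auto
    then have "F_mult s ?l = F_mult (F_neg s') ?l"
      using eq F_mult_neg_left F_mult_neg_right s(2) F_units_F[OF l] by simp
    then have "s = F_neg s'" by (rule F_mult_right_cancel[OF l s(1) F_closed(2)[OF s(2)]])
    then show ?thesis using S_neg_iff[of s'] S_subset assms(1,2) by blast
  qed
qed

lemma embed_surj:
  assumes "g \<in> {0..<40}" and "t \<in> F - {F_zero}"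
  shows "\<exists>s\<in>S. \<exists>b. embed s (g, b) = (g, t)"
proof -
  let ?l = "label (g, True)"
  have l: "?l \<in> F_units" using label_units assms(1) by simp
  define x where "x = F_div t ?l"
  have x: "x \<in> F" using F_closed(5) assms(2) l by (simp add: x_def)
  have xl: "F_mult x ?l = t"
    using F_mult_eq_iff_div[OF l x] assms(2) by (simp add: x_def)
  then have "x \<noteq> F_zero" using F_mult_eq_zero_iff[OF l F_closed(1)] assms(2) by auto
  then consider "x \<in> S" | "F_neg x \<in> S" using S_neg_iff[of x] x by blast
  then show ?thesis
  proof cases
    case 1
    then show ?thesis using xl by (auto simp: embed_def)
  next
    case 2
    have "label (g, False) = F_neg ?l" using label_Not[of "(g, True)"] assms(1) by simp
    then have "F_mult (F_neg x) (label (g, False)) = t"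
      using xl x F_units_F[OF l] assms(2) by (simp add: F_mult_neg_left F_mult_neg_right F_neg_neg F_closed)
    then show ?thesis using 2 by (auto simp: embed_def)
  qed
qed

lemma ZF_carrier_eq: "ZF_carrier m K = {0..<40} \<times> F"
  by (simp add: ZF_carrier_def F_def)

lemma ZF_zero_eq: "ZF_zero m K = (0, F_zero)"
  by (simp add: ZF_zero_def F_zero_def)

lemma ZF_minus_eq: "ZF_minus m K x y = ((fst x - fst y) mod 40, F_minus (snd x) (snd y))"
  by (simp add: ZF_minus_def F_minus_def)

definition block :: "nat \<Rightarrow> (nat \<Rightarrow> 'a) \<Rightarrow> (int \<times> (nat \<Rightarrow> 'a)) set" where
  "block k s = embed s ` (colour_class k \<times> UNIV)"

definition zero_block :: "(int \<times> (nat \<Rightarrow> 'a)) set" where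
  "zero_block = {0..<40} \<times> {F_zero}"

definition blocks :: "(int \<times> (nat \<Rightarrow> 'a)) set set" where
  "blocks = insert zero_block ((\<lambda>(k, s). block k s) ` (col ` {0..<40} \<times> S))"

lemma fst_in_range: "u \<in> colour_class k \<times> UNIV \<Longrightarrow> fst u \<in> {0..<40}"
  by (auto simp: colour_class_def)

lemma block_subset:
  assumes "s \<in> S"
  shows "block k s \<subseteq> {0..<40} \<times> (F - {F_zero})"
proof
  fix x assume "x \<in> block k s"
  then obtain u where "u \<in> colour_class k \<times> UNIV" and "x = embed s u"
    unfolding block_def by blast
  then show "x \<in> {0..<40} \<times> (F - {F_zero})"
    using embed_in[OF assms fst_in_range] by simp
qed

lemma inj_on_embed:
  assumes "s \<in> S"
  shows "inj_on (embed s) (colour_class k \<times> UNIV)"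
proof (rule inj_onI)
  fix u v assume "u \<in> colour_class k \<times> UNIV" and "embed s u = embed s v"
  then show "u = v" using embed_injective[OF assms assms fst_in_range] by blast
qed

lemma card_block: "s \<in> S \<Longrightarrow> card (block k s) = 2 * card (colour_class k)"
  unfolding block_def by (simp add: card_image inj_on_embed card_cartesian_product)

lemma block_nonempty: "k \<in> col ` {0..<40} \<Longrightarrow> block k s \<noteq> {}"
  by (auto simp: block_def colour_class_def)

lemma blocks_disjoint:
  assumes "s \<in> S" and "s' \<in> S" and "(k, s) \<noteq> (k', s')"
  shows "block k s \<inter> block k' s' = {}"
proof (rule ccontr)
  assume "block k s \<inter> block k' s' \<noteq> {}"
  then obtain x where x: "x \<in> block k s" "x \<in> block k' s'" by blast
  from x(1) obtain u where u: "u \<in> colour_class k \<times> UNIV" "x = embed s u"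
    unfolding block_def by blast
  from x(2) obtain u' where u': "u' \<in> colour_class k' \<times> UNIV" "x = embed s' u'"
    unfolding block_def by blast
  have "embed s u = embed s' u'" using u(2) u'(2) by simp
  then have "s = s' \<and> u = u'"
    by (rule embed_injective[OF assms(1,2) fst_in_range[OF u(1)]])
  moreover from this have "k = k'"
    using u(1) u'(1) by (auto simp: colour_class_def)
  ultimately show False using assms(3) by simp
qed

lemma zero_block_disjoint: "s \<in> S \<Longrightarrow> zero_block \<inter> block k s = {}"
  using block_subset by (fastforce simp: zero_block_def)

lemma Union_blocks: "\<Union> blocks = {0..<40} \<times> F"
proof
  show "\<Union> blocks \<subseteq> {0..<40} \<times> F"
    using block_subset F_closed(1) by (fastforce simp: blocks_def zero_block_def)
  show "{0..<40} \<times> F \<subseteq> \<Union> blocks"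
  proof
    fix x assume "x \<in> {0..<40::int} \<times> F"
    then obtain g t where x: "x = (g, t)" "g \<in> {0..<40}" "t \<in> F" by auto
    show "x \<in> \<Union> blocks"
    proof (cases "t = F_zero")
      case True
      then show ?thesis using x by (auto simp: blocks_def zero_block_def)
    next
      case False
      then obtain s b where "s \<in> S" "embed s (g, b) = (g, t)"
        using embed_surj x by blast
      then have "x \<in> block (col g) s"
        unfolding block_def using x by (intro image_eqI[of _ _ "(g, b)"]) (auto simp: colour_class_def)
      then show ?thesis using \<open>s \<in> S\<close> x(2) by (auto simp: blocks_def)
    qed
  qed
qed

lemma inj_on_block: "inj_on (\<lambda>(k, s). block k s) (col ` {0..<40} \<times> S)"
proof (rule inj_onI)
  fix a b assume a: "a \<in> col ` {0..<40} \<times> S" and b: "b \<in> col ` {0..<40} \<times> S"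
    and eq: "(\<lambda>(k, s). block k s) a = (\<lambda>(k, s). block k s) b"
  obtain k s k' s' where ab: "a = (k, s)" "b = (k', s')" by fastforce
  show "a = b"
  proof (rule ccontr)
    assume "a \<noteq> b"
    then have "block k s \<inter> block k' s' = {}"
      using a b ab by (intro blocks_disjoint) auto
    then show False using eq ab block_nonempty[of k s] a by auto
  qed
qed

lemma zero_block_notin: "zero_block \<notin> (\<lambda>(k, s). block k s) ` (col ` {0..<40} \<times> S)"
  using zero_block_disjoint by (force simp: zero_block_def)

lemma mset_card_blocks:
  "image_mset card (mset_set blocks) =
     add_mset 40 (\<Sum>k\<in>col ` {0..<40}. replicate_mset (card S) (2 * card (colour_class k)))"
proof -
  let ?C = "col ` {0..<40}"
  have "mset_set blocks = add_mset zero_block (image_mset (\<lambda>(k, s). block k s) (mset_set (?C \<times> S)))"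
    using zero_block_notin finite_S by (simp add: blocks_def image_mset_mset_set[OF inj_on_block])
  then have "image_mset card (mset_set blocks) =
      add_mset 40 (image_mset (\<lambda>(k, s). card (block k s)) (mset_set (?C \<times> S)))"
    by (simp add: multiset.map_comp comp_def prod.case_distrib zero_block_def card_cartesian_product)
  also have "image_mset (\<lambda>(k, s). card (block k s)) (mset_set (?C \<times> S)) =
      image_mset (\<lambda>(k, s). 2 * card (colour_class k)) (mset_set (?C \<times> S))"
    using finite_S by (intro image_mset_cong) (auto simp: card_block)
  also have "\<dots> = (\<Sum>k\<in>?C. replicate_mset (card S) (2 * card (colour_class k)))"
    using finite_S by (intro image_mset_mset_set_Times) simp_all
  finally show ?thesis .
qed

lemma count_block:
  assumes "s \<in> S"
  shows "count (diff_multiset (ZF_minus m K) (block k s)) (c, t) =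
    card {q\<in>colour_pairs k. gap q = c \<and> F_mult s (label_diff q) = t}"
proof -
  have "ZF_minus m K (embed s u) (embed s v) = (gap (u, v), F_mult s (label_diff (u, v)))"
    if "u \<in> colour_class k \<times> UNIV" and "v \<in> colour_class k \<times> UNIV" for u v
    using S_F[OF assms] label_F[OF fst_in_range[OF that(1)]] label_F[OF fst_in_range[OF that(2)]]
    by (simp add: ZF_minus_eq embed_def gap_def label_diff_def F_mult_minus_right)
  then have "count (diff_multiset (ZF_minus m K) (block k s)) (c, t) =
      card {(u, v). u \<in> colour_class k \<times> UNIV \<and> v \<in> colour_class k \<times> UNIV \<and> u \<noteq> v \<and>
        (gap (u, v), F_mult s (label_diff (u, v))) = (c, t)}"
    unfolding block_def
    by (intro count_diff_multiset_image) (simp_all add: finite_colour_class inj_on_embed[OF assms])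
  also have "\<dots> = card {q\<in>colour_pairs k. gap q = c \<and> F_mult s (label_diff q) = t}"
    by (rule arg_cong[where f = card]) (auto simp: colour_pairs_def)
  finally show ?thesis .
qed

definition flip :: "(int \<times> bool) \<times> (int \<times> bool) \<Rightarrow> (int \<times> bool) \<times> (int \<times> bool)" where
  "flip q = ((fst (fst q), \<not> snd (fst q)), (fst (snd q), \<not> snd (snd q)))"

lemma flip_colour_pairs: "q \<in> colour_pairs k \<Longrightarrow> flip q \<in> colour_pairs k"
  by (auto simp: flip_def colour_pairs_def prod_eq_iff)

lemma flip_flip: "flip (flip q) = q"
  by (simp add: flip_def)

lemma gap_flip: "gap (flip q) = gap q"
  by (simp add: gap_def flip_def)

lemma label_diff_flip:
  assumes "q \<in> colour_pairs k"
  shows "label_diff (flip q) = F_neg (label_diff q)"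
proof -
  have "fst (fst q) \<in> {0..<40}" and "fst (snd q) \<in> {0..<40}"
    using assms by (auto simp: colour_pairs_def colour_class_def)
  then show ?thesis
    by (simp add: flip_def label_diff_def label_Not label_F F_minus_neg)
qed

lemma double_sum_multipliers:
  assumes "t \<in> F - {F_zero}"
  shows "2 * (\<Sum>q\<in>{q\<in>colour_pairs k. gap q = c}. card {s\<in>S. F_mult s (label_diff q) = t}) =
    card {q\<in>colour_pairs k. gap q = c}"
proof -
  let ?Q = "{q\<in>colour_pairs k. gap q = c}"
  let ?f = "\<lambda>q. card {s\<in>S. F_mult s (label_diff q) = t}"
  have flip_sum: "(\<Sum>q\<in>?Q. ?f q) = (\<Sum>q\<in>?Q. ?f (flip q))"
    by (rule sum.reindex_bij_witness[of _ flip flip]) (auto simp: flip_flip flip_colour_pairs gap_flip)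
  have flip_pair: "?f q + ?f (flip q) = 1" if "q \<in> ?Q" for q
  proof -
    have q: "q \<in> colour_pairs k" using that by simp
    show ?thesis
      using card_multipliers[OF label_diff_units[OF q]] label_diff_flip[OF q] assms by simp
  qed
  have "2 * (\<Sum>q\<in>?Q. ?f q) = (\<Sum>q\<in>?Q. ?f q + ?f (flip q))"
    by (simp only: mult_2 sum.distrib flip_sum[symmetric])
  also have "\<dots> = card ?Q"
    using flip_pair by simp
  finally show ?thesis .
qed

lemma sum_count_blocks_nonzero:
  assumes "c \<in> {0..<40}" and "t \<in> F - {F_zero}"
  shows "(\<Sum>(k, s)\<in>col ` {0..<40} \<times> S. count (diff_multiset (ZF_minus m K) (block k s)) (c, t)) = 40"
proof -
  let ?C = "col ` {0..<40}"
  let ?Q = "\<lambda>k. {q\<in>colour_pairs k. gap q = c}"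
  have "(\<Sum>(k, s)\<in>?C \<times> S. count (diff_multiset (ZF_minus m K) (block k s)) (c, t)) =
      (\<Sum>k\<in>?C. \<Sum>s\<in>S. card {q\<in>?Q k. F_mult s (label_diff q) = t})"
    by (simp add: sum.cartesian_product[symmetric] count_block conj_assoc cong: sum.cong)
  also have "\<dots> = (\<Sum>k\<in>?C. \<Sum>q\<in>?Q k. card {s\<in>S. F_mult s (label_diff q) = t})"
  proof (rule sum.cong[OF refl])
    fix k
    show "(\<Sum>s\<in>S. card {q\<in>?Q k. F_mult s (label_diff q) = t}) =
        (\<Sum>q\<in>?Q k. card {s\<in>S. F_mult s (label_diff q) = t})"
      using sum.swap_restrict[of S "?Q k" "\<lambda>_ _. 1 :: nat" "\<lambda>s q. F_mult s (label_diff q) = t"]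
        finite_S finite_colour_pairs
      by simp
  qed
  finally have "2 * (\<Sum>(k, s)\<in>?C \<times> S. count (diff_multiset (ZF_minus m K) (block k s)) (c, t)) =
      (\<Sum>k\<in>?C. card (?Q k))"
    using double_sum_multipliers[OF assms(2)] by (simp add: sum_distrib_left)
  then show ?thesis using sum_card_colour_pairs_gap[OF assms(1)] by simp
qed

lemma count_zero_block:
  assumes "c \<in> {0..<40}"
  shows "count (diff_multiset (ZF_minus m K) zero_block) (c, t) = (if c \<noteq> 0 \<and> t = F_zero then 40 else 0)"
proof -
  have partner: "(g - h) mod 40 = c \<longleftrightarrow> h = (g - c) mod 40" if "h \<in> {0..<40}" for g h
    using diff_mod_eq_iff[OF assms that] .
  have self_partner: "g = (g - c) mod 40 \<longleftrightarrow> c = 0" if "g \<in> {0..<40}" for g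
    using partner[OF that, of g] by auto
  have "zero_block = (\<lambda>g. (g, F_zero)) ` {0..<40}"
    by (auto simp: zero_block_def)
  moreover have "ZF_minus m K (g, F_zero) (h, F_zero) = ((g - h) mod 40, F_zero)" for g h
    by (simp add: ZF_minus_eq F_minus_self F_closed(1))
  ultimately have "count (diff_multiset (ZF_minus m K) zero_block) (c, t) =
      card {(g, h). g \<in> {0..<40} \<and> h \<in> {0..<40} \<and> g \<noteq> h \<and> ((g - h) mod 40, F_zero) = (c, t)}"
    by (simp add: count_diff_multiset_image inj_on_def)
  also have "{(g, h). g \<in> {0..<40} \<and> h \<in> {0..<40} \<and> g \<noteq> h \<and> ((g - h) mod 40, F_zero) = (c, t)} =
      (if c \<noteq> 0 \<and> t = F_zero then (\<lambda>g. (g, (g - c) mod 40)) ` {0..<40} else {})"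
  proof (intro equalityI subsetI)
    fix p assume p: "p \<in> {(g, h). g \<in> {0..<40} \<and> h \<in> {0..<40} \<and> g \<noteq> h \<and> ((g - h) mod 40, F_zero) = (c, t)}"
    obtain g h where gh: "p = (g, h)" by fastforce
    with p have g: "g \<in> {0..<40}" and h: "h \<in> {0..<40}" and "g \<noteq> h" and "(g - h) mod 40 = c"
      and "t = F_zero"
      by auto
    then have "h = (g - c) mod 40" and "c \<noteq> 0"
      using partner[OF h] self_partner[OF g] by auto
    then show "p \<in> (if c \<noteq> 0 \<and> t = F_zero then (\<lambda>g. (g, (g - c) mod 40)) ` {0..<40} else {})"
      using gh g \<open>t = F_zero\<close> by auto
  next
    fix p assume p: "p \<in> (if c \<noteq> 0 \<and> t = F_zero then (\<lambda>g. (g, (g - c) mod 40)) ` {0..<40} else {})"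
    then have c: "c \<noteq> 0" and t: "t = F_zero" by (auto split: if_splits)
    with p obtain g where g: "g \<in> {0..<40}" and "p = (g, (g - c) mod 40)"
      by auto
    with c t show "p \<in> {(g, h). g \<in> {0..<40} \<and> h \<in> {0..<40} \<and> g \<noteq> h \<and> ((g - h) mod 40, F_zero) = (c, t)}"
      using partner[of "(g - c) mod 40" g] self_partner[OF g] by auto
  qed
  finally show ?thesis
    by (simp add: card_image inj_on_def)
qed

lemma count_block_zero:
  assumes "s \<in> S"
  shows "count (diff_multiset (ZF_minus m K) (block k s)) (c, F_zero) = 0"
proof -
  have "{q\<in>colour_pairs k. gap q = c \<and> F_mult s (label_diff q) = F_zero} = {}"
    using F_mult_eq_zero_iff[OF label_diff_units S_F[OF assms]] S_subset assms by auto
  then show ?thesis unfolding count_block[OF assms] by (simp only: card.empty)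
qed

lemma sum_count_blocks:
  assumes "x \<in> {0..<40} \<times> F - {(0, F_zero)}"
  shows "(\<Sum>B\<in>blocks. count (diff_multiset (ZF_minus m K) B) x) = 40"
proof -
  obtain c t where x: "x = (c, t)" by fastforce
  with assms have c: "c \<in> {0..<40}" and t: "t \<in> F" and "(c, t) \<noteq> (0, F_zero)"
    by auto
  have "(\<Sum>B\<in>(\<lambda>(k, s). block k s) ` (col ` {0..<40} \<times> S). count (diff_multiset (ZF_minus m K) B) x) =
      (\<Sum>(k, s)\<in>col ` {0..<40} \<times> S. count (diff_multiset (ZF_minus m K) (block k s)) x)"
    unfolding sum.reindex[OF inj_on_block] by (intro sum.cong) auto
  then have "(\<Sum>B\<in>blocks. count (diff_multiset (ZF_minus m K) B) x) =
      count (diff_multiset (ZF_minus m K) zero_block) (c, t) +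
      (\<Sum>(k, s)\<in>col ` {0..<40} \<times> S. count (diff_multiset (ZF_minus m K) (block k s)) (c, t))"
    using zero_block_notin finite_S x by (simp add: blocks_def)
  also have "\<dots> = 40"
  proof (cases "t = F_zero")
    case True
    have "(\<Sum>(k, s)\<in>col ` {0..<40} \<times> S. count (diff_multiset (ZF_minus m K) (block k s)) (c, t)) = 0"
      using True count_block_zero by (intro sum.neutral) auto
    then show ?thesis
      using c \<open>(c, t) \<noteq> (0, F_zero)\<close> count_zero_block True by simp
  next
    case False
    then show ?thesis using count_zero_block[OF c] sum_count_blocks_nonzero[OF c] t by simp
  qed
  finally show ?thesis .
qed

lemma blocks_pairwise_disjoint:
  assumes "B \<in> blocks" and "B' \<in> blocks" and "B \<noteq> B'"
  shows "B \<inter> B' = {}"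
proof -
  have cases: "X = zero_block \<or> (\<exists>k s. s \<in> S \<and> X = block k s)" if "X \<in> blocks" for X
    using that by (auto simp: blocks_def)
  show ?thesis
  proof (cases "B = zero_block")
    case True
    then obtain k s where "s \<in> S" and "B' = block k s"
      using cases[OF assms(2)] assms(3) by blast
    then show ?thesis using True zero_block_disjoint by simp
  next
    case False
    then obtain k s where B: "s \<in> S" "B = block k s"
      using cases[OF assms(1)] by blast
    show ?thesis
    proof (cases "B' = zero_block")
      case True
      then show ?thesis using B zero_block_disjoint by (simp add: Int_commute)
    next
      case False
      then obtain k' s' where B': "s' \<in> S" "B' = block k' s'"
        using cases[OF assms(2)] by blast
      then have "(k, s) \<noteq> (k', s')" using B assms(3) by auto
      then show ?thesis using blocks_disjoint[OF B(1) B'(1)] B B' by simp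
    qed
  qed
qed

theorem is_PDF_blocks:
  "\<exists>Bs. is_PDF (ZF_carrier m K) (ZF_minus m K) (ZF_zero m K) (40 * card F)
     (add_mset 40 (\<Sum>k\<in>col ` {0..<40}. replicate_mset (card S) (2 * card (colour_class k)))) 40 Bs"
  unfolding ZF_carrier_eq ZF_zero_eq
proof (rule is_PDF_of_block_set)
  show "finite blocks"
    using finite_S by (simp add: blocks_def)
  show "card ({0..<40::int} \<times> F) = 40 * card F"
    by (simp add: card_cartesian_product)
  show "B \<noteq> {} \<and> B \<subseteq> {0..<40} \<times> F" if "B \<in> blocks" for B
    using that block_nonempty block_subset F_closed(1) by (fastforce simp: blocks_def zero_block_def)
  show "B \<inter> B' = {}" if "B \<in> blocks" "B' \<in> blocks" "B \<noteq> B'" for B B'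
    using that by (rule blocks_pairwise_disjoint)
qed (rule Union_blocks mset_card_blocks sum_count_blocks)+

end

section \<open>A balanced colouring with classes of sizes 1, 3, 9 and 27\<close>

definition base_colouring :: "int \<Rightarrow> nat" where
  "base_colouring g =
     [2,2,2,3,3,3,3,3,0,3,3,3,3,3,3,3,2,3,1,3,3,3,3,2,3,2,3,3,1,2,3,3,3,3,2,3,3,2,1,3] ! nat g"

lemma base_colouring_balanced:
  "\<forall>c\<in>{1..<40}. card {g\<in>{0..<40}. base_colouring ((g - c) mod 40) = base_colouring g} = 20"
  unfolding base_colouring_def by code_simp

lemma balanced_colouring_base: "balanced_colouring base_colouring"
  using base_colouring_balanced by unfold_locales blast

interpretation base: balanced_colouring base_colouring
  by (rule balanced_colouring_base)

lemma base_colours: "base_colouring ` {0..<40} = {0, 1, 2, 3}"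
  unfolding base_colouring_def by code_simp

lemma card_base_colour_class:
  "card (base.colour_class 0) = 1" "card (base.colour_class 1) = 3"
  "card (base.colour_class 2) = 9" "card (base.colour_class 3) = 27"
  unfolding base.colour_class_def base_colouring_def by code_simp+

lemma card_base_colour_class_le: "card (base.colour_class k) \<le> 27"
proof (cases "k \<in> {0, 1, 2, 3}")
  case True
  then consider "k = 0" | "k = 1" | "k = 2" | "k = 3" by blast
  then show ?thesis using card_base_colour_class by cases simp_all
next
  case False
  have "base.colour_class k = {}"
  proof (rule ccontr)
    assume "base.colour_class k \<noteq> {}"
    then obtain g where "g \<in> {0..<40}" and "base_colouring g = k"
      by (auto simp: base.colour_class_def)
    then have "k \<in> base_colouring ` {0..<40}" by blast
    with False show False unfolding base_colours by blast
  qed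
  then show ?thesis by simp
qed

lemma base_block_sizes:
  "add_mset 40 (\<Sum>k\<in>base_colouring ` {0..<40}. replicate_mset r (2 * card (base.colour_class k))) =
     replicate_mset r 2 + replicate_mset r 6 + replicate_mset r 18 + replicate_mset r 54 + {#40#}"
  unfolding base_colours using card_base_colour_class by simp

lemma odd_field_family_prime_components:
  assumes "odd m"
    and "\<forall>p \<in> prime_factors m. field (K p) \<and> finite (carrier (K p)) \<and>
      card (carrier (K p)) = p ^ multiplicity p m"
  shows "odd_field_family (prime_factors m) K"
proof (rule odd_field_family.intro)
  fix p assume p: "p \<in> prime_factors m"
  then have "odd p" using assms(1) dvd_trans[of 2 p m] by (auto simp: in_prime_factors_iff)
  then show "odd (card (carrier (K p)))" using assms(2) p by simp
qed (use assms(2) in auto)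

lemma prod_card_prime_components:
  assumes "m > 0" and "\<forall>p \<in> prime_factors m. card (carrier (K p)) = p ^ multiplicity p m"
  shows "(\<Prod>p\<in>prime_factors m. card (carrier (K p))) = m"
proof -
  have "(\<Prod>p\<in>prime_factors m. card (carrier (K p))) = (\<Prod>p\<in>prime_factors m. p ^ multiplicity p m)"
    using assms(2) by (intro prod.cong) auto
  then show ?thesis using prime_factorization_nat[OF assms(1)] by simp
qed

theorem corollary7p4:
  fixes n :: nat and K :: "nat \<Rightarrow> 'a ring"
  assumes "n > 0"
    and "\<forall>p \<in> prime_factors (2*n+1). p ^ multiplicity p (2*n+1) > 54"
    and "\<forall>p \<in> prime_factors (2*n+1). field (K p) \<and> finite (carrier (K p)) \<and>
           card (carrier (K p)) = p ^ multiplicity p (2*n+1)"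
  shows "\<exists>Bs. is_PDF (ZF_carrier (2*n+1) K) (ZF_minus (2*n+1) K) (ZF_zero (2*n+1) K)
           (80*n+40)
           (replicate_mset n 2 + replicate_mset n 6 + replicate_mset n 18 + replicate_mset n 54 + {#40#})
           40 Bs"
proof -
  let ?m = "2*n+1"
  have "odd_field_family (prime_factors ?m) K"
    using assms(3) by (intro odd_field_family_prime_components) simp_all
  moreover have "pdf_construction_axioms ?m K base_colouring 27"
    by (rule pdf_construction_axioms.intro) (use card_base_colour_class_le assms(2,3) in auto)
  ultimately interpret pdf_construction ?m K base_colouring 27
    by (intro pdf_construction.intro balanced_colouring_base)
  have "card F = ?m"
    using card_F prod_card_prime_components[of ?m K] assms(3) by simp
  then have "card S = n" using card_F_eq by simp
  then show ?thesis
    using is_PDF_blocks \<open>card F = ?m\<close> base_block_sizes by (simp add: algebra_simps)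
qed

end
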